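(* Let $G$ be a planar PCC graph and let $\sigma$ be a face of $G$ such that some vertex occurs more than once in the boundary walk of $\sigma$ (i.e. the multiset $V(\sigma)$ of boundary vertices is not a set). Then $7\le|\sigma|\le 11$. The same conclusion holds if some edge occurs more than once in the boundary walk of $\sigma$ (i.e. the multiset $E(\sigma)$ of boundary edges is not a set).
   Context: $G$ is a finite simple connected graph 2-cell embedded in the sphere. For a face $\sigma$, $V(\sigma)$ and $E(\sigma)$ are the multisets of vertices and edges traversed by the boundary walk of $\sigma$, and $|\sigma|$ is its length. For a vertex $v$, $F(v)$ is the multiset of faces incident to $v$ (one per corner) and $K(v)=1-\frac{\deg(v)}{2}+\sum_{\sigma\in F(v)}\frac1{|\sigma|}$. A prism (resp. antiprism) of order $N$ is the planar graph with $2N$ vertices, two $N$-faces and $N$ quadrilaterals (resp. $2N$ triangles), each vertex incident to two quadrilaterals and one $N$-face (resp. three triangles and one $N$-face). A planar PCC graph is such a $G$ with $K(v)>0$, $\deg(v)\ge 3$ for all $v$, not a prism or antiprism. *)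

theory Defs
  imports Complex_Main "HOL-Library.Multiset"
begin

text \<open>The rotation system encodes a 2-cell embedding in an orientable surface; the
  surface is the sphere iff Euler's formula V - E + F = 2 holds.\<close>

definition simple_graph :: "'a set \<Rightarrow> ('a \<Rightarrow> 'a \<Rightarrow> bool) \<Rightarrow> bool" where
  "simple_graph V E \<longleftrightarrow> finite V \<and> (\<forall>u v. E u v \<longrightarrow> u \<in> V \<and> v \<in> V)
     \<and> (\<forall>u v. E u v \<longleftrightarrow> E v u) \<and> (\<forall>u. \<not> E u u)"

definition graph_connected :: "'a set \<Rightarrow> ('a \<Rightarrow> 'a \<Rightarrow> bool) \<Rightarrow> bool" where
  "graph_connected V E \<longleftrightarrow> (\<forall>u\<in>V. \<forall>v\<in>V. E\<^sup>*\<^sup>* u v)"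

definition nbrs :: "('a \<Rightarrow> 'a \<Rightarrow> bool) \<Rightarrow> 'a \<Rightarrow> 'a set" where
  "nbrs E v = {w. E v w}"

definition deg :: "('a \<Rightarrow> 'a \<Rightarrow> bool) \<Rightarrow> 'a \<Rightarrow> nat" where
  "deg E v = card (nbrs E v)"

definition edges :: "('a \<Rightarrow> 'a \<Rightarrow> bool) \<Rightarrow> 'a set set" where
  "edges E = {{u, v} | u v. E u v}"

definition darts :: "('a \<Rightarrow> 'a \<Rightarrow> bool) \<Rightarrow> ('a \<times> 'a) set" where
  "darts E = {(u, v). E u v}"

definition rotation_system :: "'a set \<Rightarrow> ('a \<Rightarrow> 'a \<Rightarrow> bool) \<Rightarrow> ('a \<Rightarrow> 'a \<Rightarrow> 'a) \<Rightarrow> bool" where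
  "rotation_system V E rot \<longleftrightarrow> (\<forall>v\<in>V. bij_betw (rot v) (nbrs E v) (nbrs E v)
     \<and> (\<forall>w\<in>nbrs E v. \<forall>w'\<in>nbrs E v. \<exists>k. (rot v ^^ k) w = w'))"

text \<open>Face tracing: after traversing dart (u,v), leave v along the dart to the
  neighbour following u in the rotation at v.\<close>
definition fnext :: "('a \<Rightarrow> 'a \<Rightarrow> 'a) \<Rightarrow> 'a \<times> 'a \<Rightarrow> 'a \<times> 'a" where
  "fnext rot d = (snd d, rot (snd d) (fst d))"

text \<open>The face containing dart d: the set of darts on its boundary walk
  (each dart of the walk occurs exactly once).\<close>
definition face_of :: "('a \<Rightarrow> 'a \<Rightarrow> 'a) \<Rightarrow> 'a \<times> 'a \<Rightarrow> ('a \<times> 'a) set" where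
  "face_of rot d = range (\<lambda>k. (fnext rot ^^ k) d)"

definition faces :: "('a \<Rightarrow> 'a \<Rightarrow> bool) \<Rightarrow> ('a \<Rightarrow> 'a \<Rightarrow> 'a) \<Rightarrow> ('a \<times> 'a) set set" where
  "faces E rot = face_of rot ` darts E"

definition face_len :: "('a \<times> 'a) set \<Rightarrow> nat" where
  "face_len f = card f"

definition face_verts :: "('a \<times> 'a) set \<Rightarrow> 'a multiset" where
  "face_verts f = image_mset fst (mset_set f)"

definition face_edges :: "('a \<times> 'a) set \<Rightarrow> 'a set multiset" where
  "face_edges f = image_mset (\<lambda>(u, v). {u, v}) (mset_set f)"

definition is_set_mset :: "'b multiset \<Rightarrow> bool" where
  "is_set_mset M \<longleftrightarrow> (\<forall>x. count M x \<le> 1)"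

definition plane_graph :: "'a set \<Rightarrow> ('a \<Rightarrow> 'a \<Rightarrow> bool) \<Rightarrow> ('a \<Rightarrow> 'a \<Rightarrow> 'a) \<Rightarrow> bool" where
  "plane_graph V E rot \<longleftrightarrow> simple_graph V E \<and> graph_connected V E \<and> rotation_system V E rot
     \<and> int (card V) - int (card (edges E)) + int (card (faces E rot)) = 2"

text \<open>Corners at v correspond bijectively to darts (v,w) leaving v, each lying in the
  face of that corner; so F(v) is the multiset of faces face_of (v,w), w a neighbour.\<close>
definition corners :: "('a \<Rightarrow> 'a \<Rightarrow> bool) \<Rightarrow> ('a \<Rightarrow> 'a \<Rightarrow> 'a) \<Rightarrow> 'a \<Rightarrow> ('a \<times> 'a) set multiset" where
  "corners E rot v = image_mset (\<lambda>w. face_of rot (v, w)) (mset_set (nbrs E v))"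

definition curv :: "('a \<Rightarrow> 'a \<Rightarrow> bool) \<Rightarrow> ('a \<Rightarrow> 'a \<Rightarrow> 'a) \<Rightarrow> 'a \<Rightarrow> real" where
  "curv E rot v = 1 - real (deg E v) / 2
     + (\<Sum>\<^sub># (image_mset (\<lambda>f. 1 / real (face_len f)) (corners E rot v)))"

text \<open>Prism and antiprism graphs of order N on vertices 0..2N-1
  (outer cycle 0..N-1, inner cycle N..2N-1).\<close>
definition cyc_adj :: "nat \<Rightarrow> nat \<Rightarrow> nat \<Rightarrow> bool" where
  "cyc_adj N i j \<longleftrightarrow> i < N \<and> j < N \<and> (j = (i + 1) mod N \<or> i = (j + 1) mod N)"

definition prism_adj :: "nat \<Rightarrow> nat \<Rightarrow> nat \<Rightarrow> bool" where
  "prism_adj N i j \<longleftrightarrow> cyc_adj N i j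
     \<or> (N \<le> i \<and> N \<le> j \<and> cyc_adj N (i - N) (j - N))
     \<or> (i < N \<and> j = i + N) \<or> (j < N \<and> i = j + N)"

definition antiprism_adj :: "nat \<Rightarrow> nat \<Rightarrow> nat \<Rightarrow> bool" where
  "antiprism_adj N i j \<longleftrightarrow> cyc_adj N i j
     \<or> (N \<le> i \<and> N \<le> j \<and> cyc_adj N (i - N) (j - N))
     \<or> (i < N \<and> (j = i + N \<or> j = (i + 1) mod N + N))
     \<or> (j < N \<and> (i = j + N \<or> i = (j + 1) mod N + N))"

definition is_prism :: "'a set \<Rightarrow> ('a \<Rightarrow> 'a \<Rightarrow> bool) \<Rightarrow> bool" where
  "is_prism V E \<longleftrightarrow> (\<exists>N f. N \<ge> 3 \<and> bij_betw f V {..<2 * N}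
     \<and> (\<forall>u\<in>V. \<forall>v\<in>V. E u v \<longleftrightarrow> prism_adj N (f u) (f v)))"

definition is_antiprism :: "'a set \<Rightarrow> ('a \<Rightarrow> 'a \<Rightarrow> bool) \<Rightarrow> bool" where
  "is_antiprism V E \<longleftrightarrow> (\<exists>N f. N \<ge> 3 \<and> bij_betw f V {..<2 * N}
     \<and> (\<forall>u\<in>V. \<forall>v\<in>V. E u v \<longleftrightarrow> antiprism_adj N (f u) (f v)))"

definition planar_PCC :: "'a set \<Rightarrow> ('a \<Rightarrow> 'a \<Rightarrow> bool) \<Rightarrow> ('a \<Rightarrow> 'a \<Rightarrow> 'a) \<Rightarrow> bool" where
  "planar_PCC V E rot \<longleftrightarrow> plane_graph V E rot
     \<and> (\<forall>v\<in>V. curv E rot v > 0 \<and> deg E v \<ge> 3)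
     \<and> \<not> is_prism V E \<and> \<not> is_antiprism V E"

end

(*
  Face tracing is injective on darts, so a face is a cyclic walk. Since the graph has no loops
  and no rotation has a fixed point, the walk never revisits a vertex within two steps. A
  repeated vertex or edge on the boundary of a face means the walk leaves some vertex v along
  two different darts; the two visits to v then cut the walk into two closed pieces of length
  at least 3, so the face has length at least 6. Both corners of v lie on this face and every
  face has length at least 3, so positive curvature at v gives (deg v - 2) |face| < 12, hence
  length at most 11; and a face v w1 b v w2 e v of length exactly 6 shows four distinct
  neighbours of v, which the same inequality forbids.
*)

theory Submission
  imports Defs "HOL-Combinatorics.Orbits"
begin

lemma self_in_orbit_if_inj_on_finite:
  assumes "finite A" "f ` A \<subseteq> A" "inj_on f A" "x \<in> A"
  shows "x \<in> orbit f x"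
proof -
  define g where "g y = (if y \<in> A then f y else y)" for y
  have "bij_betw f A A"
    using endo_inj_surj[OF assms(1-3)] assms(3) by (simp add: bij_betw_def)
  then have "bij_betw g A A" by (rule bij_betw_cong[THEN iffD1, rotated]) (simp add: g_def)
  then have "g permutes A" by (rule bij_imp_permutes) (simp add: g_def)
  then have "x \<in> orbit g x"
    using assms(1) by (intro permutation_self_in_orbit) (auto simp: permutation_permutes)
  moreover have "orbit g x = orbit f x"
    using assms(2,4) by (intro orbit_cong0[of x A]) (auto simp: g_def)
  ultimately show ?thesis by simp
qed

lemma is_set_mset_image_mset_mset_set:
  assumes "inj_on g A" shows "is_set_mset (image_mset g (mset_set A))"
  using assms unfolding is_set_mset_def by (simp add: image_mset_mset_set count_mset_set')

locale rotation_graph =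
  fixes V :: "'a set" and E :: "'a \<Rightarrow> 'a \<Rightarrow> bool" and rot :: "'a \<Rightarrow> 'a \<Rightarrow> 'a"
  assumes simple: "simple_graph V E" and rotation: "rotation_system V E rot"
    and deg_ge_3: "\<And>v. v \<in> V \<Longrightarrow> 3 \<le> deg E v"
begin

lemma edge_sym: "E u v \<Longrightarrow> E v u"
  using simple unfolding simple_graph_def by blast

lemma edge_in_V: "E u v \<Longrightarrow> u \<in> V"
  using simple unfolding simple_graph_def by blast

lemma no_loop: "\<not> E v v"
  using simple unfolding simple_graph_def by blast

lemma finite_nbrs: "finite (nbrs E v)"
proof -
  have "nbrs E v \<subseteq> V" using edge_in_V edge_sym by (auto simp: nbrs_def)
  then show ?thesis using simple finite_subset unfolding simple_graph_def by blast
qed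

lemma finite_darts: "finite (darts E)"
proof -
  have "darts E \<subseteq> V \<times> V" using edge_in_V edge_sym by (auto simp: darts_def)
  then show ?thesis using simple finite_subset unfolding simple_graph_def by blast
qed

lemma rot_bij: "v \<in> V \<Longrightarrow> bij_betw (rot v) (nbrs E v) (nbrs E v)"
  using rotation unfolding rotation_system_def by blast

lemma rot_no_fixpoint:
  assumes "E v w" shows "rot v w \<noteq> w"
proof
  assume fixed: "rot v w = w"
  have "(rot v ^^ k) w = w" for k by (induction k) (simp_all add: fixed)
  moreover have "\<forall>w'\<in>nbrs E v. \<exists>k. (rot v ^^ k) w = w'"
    using rotation edge_in_V[OF assms] assms unfolding rotation_system_def nbrs_def by blast
  ultimately have "nbrs E v \<subseteq> {w}" by auto
  then have "deg E v \<le> card {w}" unfolding deg_def by (rule card_mono[rotated]) simp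
  then show False using deg_ge_3[OF edge_in_V[OF assms]] by simp
qed

lemma dart_fst_neq_snd: "d \<in> darts E \<Longrightarrow> fst d \<noteq> snd d"
  using no_loop by (auto simp: darts_def)

lemma snd_fnext_neq_fst: "d \<in> darts E \<Longrightarrow> snd (fnext rot d) \<noteq> fst d"
  using rot_no_fixpoint[OF edge_sym] by (cases d) (simp add: darts_def fnext_def)

lemma fnext_in_darts:
  assumes "d \<in> darts E" shows "fnext rot d \<in> darts E"
proof (cases d)
  case (Pair u w)
  then have "E w u" using assms edge_sym by (simp add: darts_def)
  then have "rot w u \<in> nbrs E w" using bij_betwE[OF rot_bij[OF edge_in_V]] by (simp add: nbrs_def)
  then show ?thesis using Pair by (simp add: darts_def fnext_def nbrs_def)
qed

lemma funpow_fnext_in_darts: "d \<in> darts E \<Longrightarrow> (fnext rot ^^ k) d \<in> darts E"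
  by (induction k) (simp_all add: fnext_in_darts)

lemma inj_on_fnext: "inj_on (fnext rot) (darts E)"
proof (rule inj_onI)
  fix d d' assume d: "d \<in> darts E" and d': "d' \<in> darts E" and eq: "fnext rot d = fnext rot d'"
  obtain u w u' where uw: "d = (u, w)" "d' = (u', w)" "rot w u = rot w u'"
    using eq by (cases d, cases d') (simp add: fnext_def)
  have "u \<in> nbrs E w" "u' \<in> nbrs E w" "E w u"
    using d d' uw edge_sym by (auto simp: darts_def nbrs_def)
  then have "u = u'" using uw(3) bij_betw_imp_inj_on[OF rot_bij[OF edge_in_V]] by (meson inj_onD)
  then show "d = d'" using uw by simp
qed

lemma dart_in_own_orbit: "d \<in> darts E \<Longrightarrow> d \<in> orbit (fnext rot) d"
  by (rule self_in_orbit_if_inj_on_finite[OF finite_darts _ inj_on_fnext])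
    (auto intro: fnext_in_darts)

lemma face_of_eq_orbit: "d \<in> darts E \<Longrightarrow> face_of rot d = orbit (fnext rot) d"
  unfolding face_of_def by (auto simp: orbit_altdef_self_in[OF dart_in_own_orbit])

lemma face_of_subset_darts: "d \<in> darts E \<Longrightarrow> face_of rot d \<subseteq> darts E"
  unfolding face_of_def using funpow_fnext_in_darts by blast

lemma face_of_eq_if_in:
  assumes "d \<in> darts E" "d' \<in> face_of rot d" shows "face_of rot d' = face_of rot d"
proof -
  have "d' \<in> darts E" using assms face_of_subset_darts by blast
  moreover have "cyclic_on (fnext rot) (face_of rot d)"
    using assms(1) by (simp add: face_of_eq_orbit cyclic_on_singleI[OF dart_in_own_orbit])
  ultimately show ?thesis
    using assms by (simp add: face_of_eq_orbit orbit_cyclic_eq3)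
qed

lemma face_walk:
  assumes "d \<in> darts E"
  defines "walk \<equiv> \<lambda>k. (fnext rot ^^ k) d" and "s \<equiv> face_len (face_of rot d)"
  shows "d' \<in> face_of rot d \<longleftrightarrow> (\<exists>k<s. walk k = d')" and "inj_on walk {..<s}" and "walk s = d"
proof -
  let ?p = "funpow_dist1 (fnext rot) d d"
  have self: "d \<in> orbit (fnext rot) d" using assms(1) by (rule dart_in_own_orbit)
  have face: "face_of rot d = walk ` {..<?p}" and inj: "inj_on walk {..<?p}"
    using orbit_conv_funpow_dist1[OF self] inj_on_funpow_dist1[OF self] assms(1)
    by (simp_all add: walk_def face_of_eq_orbit atLeast0LessThan)
  then have "s = ?p" by (simp add: s_def face_len_def card_image)
  then show "d' \<in> face_of rot d \<longleftrightarrow> (\<exists>k<s. walk k = d')" "inj_on walk {..<s}" "walk s = d"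
    using face inj funpow_dist1_prop[OF self] by (auto simp: walk_def)
qed

lemma fnext_walk_dart:
  "(fnext rot ^^ k) d = (fst ((fnext rot ^^ k) d), fst ((fnext rot ^^ Suc k) d))"
  by (simp add: fnext_def)

lemma face_walk_no_short_return:
  assumes "d \<in> darts E" "0 < k" "k \<le> 2"
  shows "fst ((fnext rot ^^ (i + k)) d) \<noteq> fst ((fnext rot ^^ i) d)"
proof -
  let ?d = "(fnext rot ^^ i) d"
  have d: "?d \<in> darts E" using assms(1) by (rule funpow_fnext_in_darts)
  have "k = 1 \<or> k = 2" using assms(2,3) by auto
  then have "fst ((fnext rot ^^ k) ?d) \<noteq> fst ?d"
    using dart_fst_neq_snd[OF d] snd_fnext_neq_fst[OF d]
    by (auto simp: fnext_def numeral_2_eq_2)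
  then show ?thesis by (simp add: add.commute[of i] funpow_add)
qed

lemma face_len_ge_3:
  assumes "d \<in> darts E" shows "3 \<le> face_len (face_of rot d)"
proof -
  let ?s = "face_len (face_of rot d)"
  have "d \<in> face_of rot d" unfolding face_of_def by (metis funpow_0 rangeI)
  moreover have "finite (face_of rot d)"
    using face_of_subset_darts[OF assms] finite_darts by (rule finite_subset)
  ultimately have "0 < ?s" unfolding face_len_def by (auto simp: card_gt_0_iff)
  moreover have "fst ((fnext rot ^^ (0 + ?s)) d) = fst ((fnext rot ^^ 0) d)"
    using face_walk(3)[OF assms] by simp
  ultimately show ?thesis using face_walk_no_short_return[OF assms, of ?s 0] by linarith
qed

lemma face_walk_revisit_gap:
  assumes d: "d \<in> darts E" and "0 < j" and "j < face_len (face_of rot d)"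
    and revisit: "fst ((fnext rot ^^ j) d) = fst d"
  shows "3 \<le> j" and "j + 3 \<le> face_len (face_of rot d)"
proof -
  define s where "s = face_len (face_of rot d)"
  define x where "x i = fst ((fnext rot ^^ i) d)" for i
  have "j < s" using assms(3) by (simp add: s_def)
  have no_return: "x (i + m) \<noteq> x i" if "0 < m" "m \<le> 2" for i m
    using face_walk_no_short_return[OF d that] by (simp add: x_def)
  have "x j = x 0" "x s = x 0" using revisit face_walk(3)[OF d] by (simp_all add: x_def s_def)
  have "\<not> j \<le> 2" using no_return[of j 0] \<open>0 < j\<close> \<open>x j = x 0\<close> by auto
  then show "3 \<le> j" by linarith
  have "\<not> s - j \<le> 2"
    using no_return[of "s - j" j] \<open>x j = x 0\<close> \<open>x s = x 0\<close> \<open>j < s\<close> by auto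
  then show "j + 3 \<le> face_len (face_of rot d)" using \<open>j < s\<close> by (simp add: s_def)
qed

lemma curv_pos_shared_face_bound:
  assumes curv_pos: "0 < curv E rot v" and a: "E v a" and c: "E v c" and "a \<noteq> c"
    and shared: "face_of rot (v, c) = face_of rot (v, a)"
  shows "(real (deg E v) - 2) * real (face_len (face_of rot (v, a))) < 12"
proof -
  let ?N = "nbrs E v"
  define L where "L w = real (face_len (face_of rot (v, w)))" for w
  define s where "s = L a"
  define k where "k = real (deg E v)"
  have L_ge_3: "3 \<le> L w" if "w \<in> ?N" for w
    using that face_len_ge_3 by (simp add: L_def nbrs_def darts_def)
  have "3 \<le> s" unfolding s_def using a by (intro L_ge_3) (simp add: nbrs_def)
  have ac: "{a, c} \<subseteq> ?N" using a c by (simp add: nbrs_def)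
  have "(\<Sum>w\<in>?N. 1 / L w) = (\<Sum>w\<in>?N - {a, c}. 1 / L w) + (\<Sum>w\<in>{a, c}. 1 / L w)"
    using sum.subset_diff[OF ac finite_nbrs] by simp
  also have "(\<Sum>w\<in>{a, c}. 1 / L w) = 2 / s"
    using \<open>a \<noteq> c\<close> shared by (simp add: s_def L_def)
  also have "(\<Sum>w\<in>?N - {a, c}. 1 / L w) \<le> real (card (?N - {a, c})) * (1 / 3)"
    by (rule sum_bounded_above) (use L_ge_3 in \<open>auto simp: divide_simps\<close>)
  also have "real (card (?N - {a, c})) = k - 2"
    using card_Diff_subset[OF _ ac] finite_nbrs ac \<open>a \<noteq> c\<close> deg_ge_3[OF edge_in_V[OF a]]
    by (simp add: k_def deg_def of_nat_diff)
  finally have "(\<Sum>w\<in>?N. 1 / L w) \<le> (k - 2) / 3 + 2 / s" by simp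
  moreover have "curv E rot v = 1 - k / 2 + (\<Sum>w\<in>?N. 1 / L w)"
    unfolding curv_def corners_def L_def k_def
    by (simp add: sum_unfold_sum_mset multiset.map_comp comp_def)
  ultimately have "0 < 1 - k / 2 + (k - 2) / 3 + 2 / s" using curv_pos by linarith
  then have "0 < 6 * s * (1 - k / 2 + (k - 2) / 3 + 2 / s)" using \<open>3 \<le> s\<close> by simp
  also have "\<dots> = 12 - (k - 2) * s" using \<open>3 \<le> s\<close> by (simp add: field_simps)
  finally have "(k - 2) * s < 12" by simp
  then show ?thesis by (simp add: s_def L_def k_def)
qed

lemma deg_ge_4_if_hexagonal_face_revisits:
  assumes d: "d \<in> darts E" and len: "face_len (face_of rot d) = 6"
    and revisit: "fst ((fnext rot ^^ 3) d) = fst d"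
  shows "4 \<le> deg E (fst d)"
proof -
  define x where "x k = fst ((fnext rot ^^ k) d)" for k
  have dart: "(fnext rot ^^ k) d = (x k, x (Suc k))" for k
    unfolding x_def by (rule fnext_walk_dart)
  have edge: "E (x k) (x (Suc k))" for k
    using funpow_fnext_in_darts[OF d, of k] by (simp add: dart darts_def)
  have no_return: "x (i + k) \<noteq> x i" if "0 < k" "k \<le> 2" for i k
    using face_walk_no_short_return[OF d that] by (simp add: x_def)
  have periodic: "x (k + 6) = x k" for k
    using face_walk(3)[OF d] len by (simp add: x_def funpow_add)
  have distinct_darts: "(x i, x (Suc i)) \<noteq> (x j, x (Suc j))" if "i < j" "j < 6" for i j
    using face_walk(2)[OF d] len that inj_onD[of _ _ i j] by (fastforce simp: dart)
  have v: "x 0 = fst d" "x 3 = fst d" "x 6 = fst d"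
    using revisit periodic[of 0] by (simp_all add: x_def)
  have "{x 1, x 2, x 4, x 5} \<subseteq> nbrs E (fst d)"
    using edge[of 0] edge[of 2] edge[of 3] edge[of 5] v edge_sym
    by (simp add: nbrs_def numeral_eq_Suc)
  moreover have "card {x 1, x 2, x 4, x 5} = 4"
  proof -
    have "x 1 \<noteq> x 4" "x 2 \<noteq> x 5"
      using distinct_darts[of 0 3] distinct_darts[of 2 5] v by (simp_all add: numeral_eq_Suc)
    moreover have "x 1 \<noteq> x 2" "x 4 \<noteq> x 5" "x 2 \<noteq> x 4" "x 5 \<noteq> x 1"
      using no_return[of 1 1] no_return[of 1 4] no_return[of 2 2] no_return[of 2 5] periodic[of 1]
      by (simp_all add: numeral_eq_Suc)
    ultimately show ?thesis by auto
  qed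
  ultimately show ?thesis
    unfolding deg_def by (metis card_mono finite_nbrs)
qed

lemma face_len_bounds_if_two_darts_from_vertex:
  assumes curv_pos: "\<And>u. u \<in> V \<Longrightarrow> 0 < curv E rot u" and \<sigma>: "\<sigma> \<in> faces E rot"
    and in1: "(v, w1) \<in> \<sigma>" and in2: "(v, w2) \<in> \<sigma>" and "w1 \<noteq> w2"
  shows "7 \<le> face_len \<sigma> \<and> face_len \<sigma> \<le> 11"
proof -
  let ?d = "(v, w1)"
  obtain d0 where d0: "d0 \<in> darts E" and \<sigma>_d0: "\<sigma> = face_of rot d0"
    using \<sigma> by (auto simp: faces_def)
  have d: "?d \<in> darts E" using face_of_subset_darts[OF d0] in1 \<sigma>_d0 by blast
  have \<sigma>_eq: "\<sigma> = face_of rot ?d" using face_of_eq_if_in[OF d0, of ?d] in1 \<sigma>_d0 by simp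
  have "(v, w2) \<in> darts E" using face_of_subset_darts[OF d0] in2 \<sigma>_d0 by blast
  then have w1: "E v w1" and w2: "E v w2" using d by (simp_all add: darts_def)
  define s where "s = face_len \<sigma>"
  define k where "k = deg E v"
  have bound: "(real k - 2) * real s < 12"
    using curv_pos_shared_face_bound[OF curv_pos[OF edge_in_V[OF w1]] w1 w2 \<open>w1 \<noteq> w2\<close>]
      face_of_eq_if_in[OF d, of "(v, w2)"] in2
    unfolding s_def k_def \<sigma>_eq by simp
  have "3 \<le> k" using deg_ge_3[OF edge_in_V[OF w1]] by (simp add: k_def)
  then have "1 * real s \<le> (real k - 2) * real s" by (intro mult_right_mono) simp_all
  then have "real s < 12" using bound by linarith
  then have "s \<le> 11" by linarith
  obtain j where "j < s" and j: "(fnext rot ^^ j) ?d = (v, w2)"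
    using in2 face_walk(1)[OF d] unfolding s_def \<sigma>_eq by blast
  have "j \<noteq> 0" using j \<open>w1 \<noteq> w2\<close> by (cases j) auto
  then have "3 \<le> j" "j + 3 \<le> s"
    using face_walk_revisit_gap[OF d, of j] \<open>j < s\<close> j by (simp_all add: s_def \<sigma>_eq)
  have "s \<noteq> 6"
  proof
    assume "s = 6"
    then have "j = 3" using \<open>3 \<le> j\<close> \<open>j + 3 \<le> s\<close> by linarith
    then have "fst ((fnext rot ^^ 3) ?d) = fst ?d" using j by simp
    moreover have "face_len (face_of rot ?d) = 6" using \<open>s = 6\<close> by (simp add: s_def \<sigma>_eq)
    ultimately have "4 \<le> k"
      using deg_ge_4_if_hexagonal_face_revisits[OF d] by (simp add: k_def)
    then show False using bound \<open>s = 6\<close> by simp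
  qed
  then show ?thesis using \<open>3 \<le> j\<close> \<open>j + 3 \<le> s\<close> \<open>s \<le> 11\<close> by (simp add: s_def)
qed

lemma two_darts_from_vertex_if_repeated:
  assumes \<sigma>: "\<sigma> \<in> faces E rot"
    and repeated: "\<not> is_set_mset (face_verts \<sigma>) \<or> \<not> is_set_mset (face_edges \<sigma>)"
  obtains v w1 w2 where "(v, w1) \<in> \<sigma>" "(v, w2) \<in> \<sigma>" "w1 \<noteq> w2"
proof (cases "is_set_mset (face_verts \<sigma>)")
  case False
  then have "\<not> inj_on fst \<sigma>"
    using is_set_mset_image_mset_mset_set unfolding face_verts_def by blast
  then obtain u w u' w' where "(u, w) \<in> \<sigma>" "(u', w') \<in> \<sigma>" "(u, w) \<noteq> (u', w')" "u = u'"
    unfolding inj_on_def by force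
  then show ?thesis using that by blast
next
  case True
  then have "\<not> inj_on (\<lambda>(u, w). {u, w}) \<sigma>"
    using repeated is_set_mset_image_mset_mset_set unfolding face_edges_def by blast
  then obtain u w u' w' where uw: "(u, w) \<in> \<sigma>" "(u', w') \<in> \<sigma>"
    and "(u, w) \<noteq> (u', w')" "{u, w} = {u', w'}"
    unfolding inj_on_def by force
  then have "(w, u) \<in> \<sigma>" by (metis doubleton_eq_iff)
  obtain d0 where "d0 \<in> darts E" and \<sigma>_eq: "\<sigma> = face_of rot d0" using \<sigma> by (auto simp: faces_def)
  then have "E u w" using uw(1) face_of_subset_darts by (auto simp: darts_def)
  \<comment> \<open>the dart following \<open>(w, u)\<close> leaves \<open>u\<close> a second time\<close>
  from \<open>(w, u) \<in> \<sigma>\<close> obtain n where "(fnext rot ^^ n) d0 = (w, u)"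
    by (auto simp: \<sigma>_eq face_of_def)
  then have "(u, rot u w) = (fnext rot ^^ Suc n) d0" by (simp add: fnext_def)
  then have "(u, rot u w) \<in> \<sigma>" unfolding \<sigma>_eq face_of_def by (metis rangeI)
  then show ?thesis using that uw(1) rot_no_fixpoint[OF \<open>E u w\<close>] by blast
qed

end

theorem lemma2p2:
  fixes V :: "'a set" and E :: "'a \<Rightarrow> 'a \<Rightarrow> bool" and rot :: "'a \<Rightarrow> 'a \<Rightarrow> 'a"
    and \<sigma> :: "('a \<times> 'a) set"
  assumes "planar_PCC V E rot"
    and "\<sigma> \<in> faces E rot"
    and "\<not> is_set_mset (face_verts \<sigma>) \<or> \<not> is_set_mset (face_edges \<sigma>)"
  shows "7 \<le> face_len \<sigma> \<and> face_len \<sigma> \<le> 11"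
proof -
  have curv_pos: "\<And>v. v \<in> V \<Longrightarrow> 0 < curv E rot v"
    using assms(1) by (simp add: planar_PCC_def)
  interpret rotation_graph V E rot
    using assms(1) by unfold_locales (simp_all add: planar_PCC_def plane_graph_def)
  obtain v w1 w2 where "(v, w1) \<in> \<sigma>" "(v, w2) \<in> \<sigma>" "w1 \<noteq> w2"
    using two_darts_from_vertex_if_repeated[OF assms(2,3)] .
  then show ?thesis using face_len_bounds_if_two_darts_from_vertex[OF curv_pos assms(2)] by blast
qed

end
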